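(* For every positive integer $k$, the maximum cardinality of an avoidable subset of $\overline{S_k}$ is $k!-k$.
   Context: For $\sigma\in S_n$, the cyclic permutation $[\sigma]$ is the set of all rotations of $\sigma$. For $\pi\in S_k$, the totally vincular pattern $\overline{\pi}$ is $\pi$ with all adjacent positions overlined; a cyclic permutation $[\sigma]$ of length $n\ge k$ contains $\overline{\pi}$ if some $k$ cyclically consecutive entries of $\sigma$ are order-isomorphic to $\pi$. $\overline{S_k}$ is the set of totally vincular patterns of length $k$. For $\Pi\subseteq\overline{S_k}$, $\mathrm{Av}_n[\Pi]$ is the set of cyclic permutations of length $n$ containing no pattern of $\Pi$. $\Pi$ is unavoidable if $|\mathrm{Av}_n[\Pi]|=0$ for all sufficiently large $n$, and avoidable otherwise (i.e. $|\mathrm{Av}_n[\Pi]|>0$ for arbitrarily large $n$). *)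

theory Defs
  imports Main
begin

definition perms :: "nat \<Rightarrow> nat list set" where
  "perms n = {xs. distinct xs \<and> set xs = {0..<n}}"

definition order_iso :: "nat list \<Rightarrow> nat list \<Rightarrow> bool" where
  "order_iso xs ys \<longleftrightarrow> length xs = length ys \<and>
     (\<forall>i<length xs. \<forall>j<length xs. (xs ! i < xs ! j) = (ys ! i < ys ! j))"

text \<open>The cyclic permutation [sigma]: the set of all rotations of sigma.\<close>
definition cyc :: "nat list \<Rightarrow> nat list set" where
  "cyc \<sigma> = {rotate r \<sigma> | r. r < length \<sigma>}"

text \<open>The cyclic permutation [sigma] (length n >= k) contains the totally vincular
  pattern overline pi: some k cyclically consecutive entries are order-isomorphic to pi.\<close>
definition cyc_contains :: "nat list \<Rightarrow> nat list \<Rightarrow> bool" where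
  "cyc_contains \<sigma> \<pi> \<longleftrightarrow> length \<pi> \<le> length \<sigma> \<and>
     (\<exists>r<length \<sigma>. order_iso (take (length \<pi>) (rotate r \<sigma>)) \<pi>)"

definition Av :: "nat \<Rightarrow> nat list set \<Rightarrow> nat list set set" where
  "Av n \<Pi> = {cyc \<sigma> | \<sigma>. \<sigma> \<in> perms n \<and> (\<forall>\<pi>\<in>\<Pi>. \<not> cyc_contains \<sigma> \<pi>)}"

definition avoidable :: "nat list set \<Rightarrow> bool" where
  "avoidable \<Pi> \<longleftrightarrow> (\<forall>N. \<exists>n\<ge>N. card (Av n \<Pi>) > 0)"

end

theory Submission
  imports Defs
begin

(* A cyclic permutation of length n >= k realises at least k distinct patterns of length k.
   Count the order types of the windows of j cyclically consecutive entries: while there are at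
   most j of them, their number grows strictly with j.  Otherwise the type of a window determines
   the type of the next one, so two of the first j + 1 windows that agree (pigeonhole) at distance
   p <= j force all windows at a, a + p, a + 2p, ... to agree; the entries there are then strictly
   monotone, although the sequence returns to its start after n steps.  Hence an avoidable set
   misses at least k patterns.  Conversely the identity of any length n >= k contains only the k
   rotations of the identity of length k, so all other k! - k patterns are avoidable together. *)

definition order_type :: "nat \<Rightarrow> (nat \<Rightarrow> 'a::linorder) \<Rightarrow> nat \<Rightarrow> nat \<Rightarrow> bool" where
  "order_type k f = (\<lambda>a b. a < k \<and> b < k \<and> f a < f b)"

lemma order_iso_iff_order_type:
  "order_iso xs ys \<longleftrightarrow>
     length xs = length ys \<and> order_type (length xs) ((!) xs) = order_type (length xs) ((!) ys)"
  unfolding order_iso_def order_type_def by (auto simp: fun_eq_iff)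

lemma order_iso_sym: "order_iso xs ys \<Longrightarrow> order_iso ys xs"
  unfolding order_iso_def by simp

lemma order_iso_trans: "order_iso xs ys \<Longrightarrow> order_iso ys zs \<Longrightarrow> order_iso xs zs"
  unfolding order_iso_def by simp

lemma order_iso_map_strict_mono_on:
  "strict_mono_on (set xs) f \<Longrightarrow> order_iso xs (map f xs)"
  unfolding order_iso_def by (simp add: strict_mono_on_less)

lemma perms_iff: "xs \<in> perms k \<longleftrightarrow> length xs = k \<and> distinct xs \<and> set xs \<subseteq> {0..<k}"
proof
  assume "xs \<in> perms k"
  then have "distinct xs" and "set xs = {0..<k}" by (simp_all add: perms_def)
  moreover from this have "length xs = k" using distinct_card by fastforce
  ultimately show "length xs = k \<and> distinct xs \<and> set xs \<subseteq> {0..<k}" by simp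
next
  assume xs: "length xs = k \<and> distinct xs \<and> set xs \<subseteq> {0..<k}"
  then have "set xs = {0..<k}" by (simp add: card_subset_eq distinct_card)
  with xs show "xs \<in> perms k" unfolding perms_def by simp
qed

lemma length_perms: "\<pi> \<in> perms k \<Longrightarrow> length \<pi> = k"
  by (simp add: perms_iff)

lemma finite_perms: "finite (perms k)"
proof (rule finite_subset)
  show "perms k \<subseteq> {xs. set xs \<subseteq> {0..<k} \<and> length xs = k}" by (simp add: perms_iff subset_iff)
qed (rule finite_lists_length_eq, simp)

lemma card_perms: "card (perms k) = fact k"
proof -
  have "perms k = {xs. length xs = k \<and> distinct xs \<and> set xs \<subseteq> {0..<k}}"
    using perms_iff by blast
  then show ?thesis by (simp add: card_lists_distinct_length_eq fact_prod)
qed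

lemma perms_nth_eq_card_less:
  assumes \<pi>: "\<pi> \<in> perms k" and "a < k"
  shows "\<pi> ! a = card {b. b < k \<and> \<pi> ! b < \<pi> ! a}"
proof -
  have len: "length \<pi> = k" and dist: "distinct \<pi>" and set: "set \<pi> = {0..<k}"
    using \<pi> by (simp_all add: perms_def length_perms)
  have "(!) \<pi> ` {b. b < k \<and> \<pi> ! b < \<pi> ! a} = {..<\<pi> ! a}"
  proof (intro equalityI subsetI)
    fix v assume "v \<in> {..<\<pi> ! a}"
    moreover have "\<pi> ! a < k" using set len \<open>a < k\<close> nth_mem by fastforce
    ultimately have "v \<in> set \<pi>" using set by simp
    then obtain b where "b < k" "\<pi> ! b = v" using len by (auto simp: in_set_conv_nth)
    with \<open>v \<in> {..<\<pi> ! a}\<close> show "v \<in> (!) \<pi> ` {b. b < k \<and> \<pi> ! b < \<pi> ! a}" by auto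
  qed auto
  moreover have "inj_on ((!) \<pi>) {b. b < k \<and> \<pi> ! b < \<pi> ! a}"
    using dist len by (intro inj_on_nth) auto
  ultimately show ?thesis by (metis card_image card_lessThan)
qed

lemma order_iso_perms_eq:
  assumes \<pi>: "\<pi> \<in> perms k" and \<pi>': "\<pi>' \<in> perms k" and "order_iso \<pi> \<pi>'"
  shows "\<pi> = \<pi>'"
proof (rule nth_equalityI)
  show len: "length \<pi> = length \<pi>'" using \<pi> \<pi>' by (simp add: length_perms)
  fix a assume "a < length \<pi>"
  with \<pi> have a: "a < k" by (simp add: length_perms)
  have "{b. b < k \<and> \<pi> ! b < \<pi> ! a} = {b. b < k \<and> \<pi>' ! b < \<pi>' ! a}"
    using \<open>order_iso \<pi> \<pi>'\<close> a \<pi> by (auto simp: order_iso_def length_perms)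
  then show "\<pi> ! a = \<pi>' ! a"
    using perms_nth_eq_card_less[OF \<pi> a] perms_nth_eq_card_less[OF \<pi>' a] by simp
qed

lemma ex_perms_order_iso:
  assumes "distinct xs"
  shows "\<exists>\<pi> \<in> perms (length xs). order_iso xs \<pi>"
proof
  define \<rho> where "\<rho> x = card {y \<in> set xs. y < x}" for x
  have mono: "strict_mono_on (set xs) \<rho>"
    unfolding \<rho>_def by (rule strict_mono_onI, rule psubset_card_mono) auto
  have "\<rho> x < length xs" if "x \<in> set xs" for x
  proof -
    have "\<rho> x < card (set xs)"
      unfolding \<rho>_def using that by (intro psubset_card_mono) auto
    then show ?thesis using assms by (simp add: distinct_card)
  qed
  with assms strict_mono_on_imp_inj_on[OF mono]
  show "map \<rho> xs \<in> perms (length xs)" by (auto simp: perms_iff distinct_map)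
  show "order_iso xs (map \<rho> xs)" using mono by (rule order_iso_map_strict_mono_on)
qed

definition cyc_nth :: "'a list \<Rightarrow> nat \<Rightarrow> 'a" where
  "cyc_nth xs i = xs ! (i mod length xs)"

definition window_type :: "'a::linorder list \<Rightarrow> nat \<Rightarrow> nat \<Rightarrow> nat \<Rightarrow> nat \<Rightarrow> bool" where
  "window_type xs j i = order_type j (\<lambda>a. cyc_nth xs (i + a))"

definition window_types :: "'a::linorder list \<Rightarrow> nat \<Rightarrow> (nat \<Rightarrow> nat \<Rightarrow> bool) set" where
  "window_types xs j = window_type xs j ` {..<length xs}"

lemma cyc_nth_eq_iff:
  assumes "distinct xs" and "xs \<noteq> []"
  shows "cyc_nth xs i = cyc_nth xs i' \<longleftrightarrow> i mod length xs = i' mod length xs"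
  using assms by (simp add: cyc_nth_def nth_eq_iff_index_eq)

lemma cyc_nth_add_mult: "cyc_nth xs (i + m * length xs) = cyc_nth xs i"
  by (simp add: cyc_nth_def)

lemma cyc_nth_add_neq:
  assumes "distinct xs" and "0 < p" and "p < length xs"
  shows "cyc_nth xs i \<noteq> cyc_nth xs (i + p)"
proof
  assume "cyc_nth xs i = cyc_nth xs (i + p)"
  moreover have "xs \<noteq> []" using assms(3) by auto
  ultimately have "i mod length xs = (i + p) mod length xs"
    using cyc_nth_eq_iff[OF assms(1)] by simp
  then have "length xs dvd p" using mod_eq_dvd_iff_nat[of i "i + p" "length xs"] by simp
  with assms show False using nat_dvd_not_less by blast
qed

lemma window_type_mod: "window_type xs j (i mod length xs) = window_type xs j i"
  by (simp add: window_type_def cyc_nth_def mod_add_left_eq)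

lemma window_type_in_window_types:
  "xs \<noteq> [] \<Longrightarrow> window_type xs j i \<in> window_types xs j"
  unfolding window_types_def
  by (metis window_type_mod imageI length_greater_0_conv lessThan_iff mod_less_divisor)

lemma finite_window_types: "finite (window_types xs j)"
  by (simp add: window_types_def)

lemma window_types_restrict:
  "window_types xs j = (\<lambda>R a b. a < j \<and> b < j \<and> R a b) ` window_types xs (Suc j)"
  unfolding window_types_def image_image
  by (rule image_cong) (auto simp: window_type_def order_type_def fun_eq_iff)

lemma card_window_types_mono: "card (window_types xs j) \<le> card (window_types xs (Suc j))"
  using card_image_le[OF finite_window_types, of "\<lambda>R a b. a < j \<and> b < j \<and> R a b" xs "Suc j"]
  by (simp only: window_types_restrict[symmetric])

lemma window_type_Suc_shift:
  "window_type xs j (Suc i) = (\<lambda>a b. window_type xs (Suc j) i (Suc a) (Suc b))"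
  by (simp add: window_type_def order_type_def fun_eq_iff)

lemma window_type_Suc_determined:
  assumes "card (window_types xs (Suc j)) = card (window_types xs j)" and "xs \<noteq> []"
    and "window_type xs j i = window_type xs j i'"
  shows "window_type xs (Suc j) i = window_type xs (Suc j) i'"
proof -
  define \<rho> where "\<rho> = (\<lambda>R a b. a < j \<and> b < j \<and> (R a b :: bool))"
  have inj: "inj_on \<rho> (window_types xs (Suc j))"
    using assms(1) window_types_restrict[of xs j, folded \<rho>_def]
    by (intro eq_card_imp_inj_on) (simp_all add: finite_window_types)
  have "\<rho> (window_type xs (Suc j) i) = window_type xs j i" for i
    by (auto simp: \<rho>_def window_type_def order_type_def fun_eq_iff)
  with assms(3) have "\<rho> (window_type xs (Suc j) i) = \<rho> (window_type xs (Suc j) i')"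
    by simp
  with inj_on_eq_iff[OF inj] show ?thesis
    by (simp add: assms(2) window_type_in_window_types)
qed

lemma window_type_shift_determined:
  assumes "card (window_types xs (Suc j)) = card (window_types xs j)" and "xs \<noteq> []"
    and "window_type xs j i = window_type xs j i'"
  shows "window_type xs j (i + m) = window_type xs j (i' + m)"
proof (induction m)
  case (Suc m)
  then have "window_type xs (Suc j) (i + m) = window_type xs (Suc j) (i' + m)"
    by (rule window_type_Suc_determined[OF assms(1,2)])
  then show ?case by (simp add: window_type_Suc_shift)
qed (simp add: assms(3))

lemma uniform_steps_no_return:
  fixes t :: "nat \<Rightarrow> 'a::linorder"
  assumes step: "\<And>m. t m \<noteq> t (Suc m)" and uniform: "\<And>m. (t m < t (Suc m)) = (t 0 < t 1)"
    and "0 < n"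
  shows "t n \<noteq> t 0"
proof (cases "t 0 < t 1")
  case True
  then have "t m < t (Suc m)" for m using uniform[of m] by blast
  then have "t 0 < t n" using \<open>0 < n\<close> by (rule lift_Suc_mono_less)
  then show ?thesis by simp
next
  case False
  then have "t (Suc m) \<le> t m" for m using uniform[of m] step[of m] by auto
  then have "t n \<le> t 1" by (rule lift_Suc_antimono_le) (use \<open>0 < n\<close> in simp)
  moreover have "t 1 < t 0" using False step[of 0] by auto
  ultimately show ?thesis by simp
qed

lemma inj_on_window_type_if_card_eq:
  assumes xs: "distinct xs" and j: "Suc j \<le> length xs"
    and eq: "card (window_types xs (Suc j)) = card (window_types xs j)"
  shows "inj_on (window_type xs j) {..j}"
proof -
  let ?n = "length xs" and ?s = "cyc_nth xs" and ?w = "window_type xs"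
  have ne: "xs \<noteq> []" using j by auto
  have "?w j a \<noteq> ?w j b" if "a < b" "b \<le> j" for a b
  proof
    assume ab: "?w j a = ?w j b"
    define p where "p = b - a"
    have p: "0 < p" "p \<le> j" and b: "b = a + p" using \<open>a < b\<close> \<open>b \<le> j\<close> by (simp_all add: p_def)
    have period: "?w j (a + m * p) = ?w j a" for m
    proof (induction m)
      case (Suc m)
      have "?w j (a + m * p) = ?w j (b + m * p)"
        by (rule window_type_shift_determined[OF eq ne ab])
      with Suc show ?case by (simp add: b add.assoc)
    qed simp
    have uniform: "(?s (a + m * p) < ?s (a + Suc m * p)) = (?s (a + 0 * p) < ?s (a + 1 * p))" for m
    proof -
      have "?w (Suc j) (a + m * p) 0 p = ?w (Suc j) a 0 p"
        using window_type_Suc_determined[OF eq ne period] by simp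
      with p show ?thesis by (simp add: window_type_def order_type_def algebra_simps)
    qed
    have step: "?s (a + m * p) \<noteq> ?s (a + Suc m * p)" for m
      using cyc_nth_add_neq[OF xs p(1), of "a + m * p"] p j by (simp add: algebra_simps)
    have "?s (a + ?n * p) = ?s (a + 0 * p)"
      using cyc_nth_add_mult[of xs a p] by (simp add: mult.commute)
    moreover have "?s (a + ?n * p) \<noteq> ?s (a + 0 * p)"
      using uniform_steps_no_return[of "\<lambda>m. ?s (a + m * p)", OF step uniform] ne by blast
    ultimately show False by contradiction
  qed
  then show ?thesis
    by (intro inj_onI) (metis atMost_iff linorder_neqE_nat)
qed

lemma card_window_types_Suc_gt:
  assumes xs: "distinct xs" and j: "Suc j \<le> length xs" and small: "card (window_types xs j) \<le> j"
  shows "card (window_types xs j) < card (window_types xs (Suc j))"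
proof (rule ccontr)
  assume "\<not> ?thesis"
  then have "card (window_types xs (Suc j)) = card (window_types xs j)"
    using card_window_types_mono[of xs j] by simp
  with xs j have "inj_on (window_type xs j) {..j}" by (rule inj_on_window_type_if_card_eq)
  moreover have "xs \<noteq> []" using j by auto
  ultimately have "card {..j} \<le> card (window_types xs j)"
    by (intro card_inj_on_le) (auto simp: window_type_in_window_types finite_window_types)
  with small show False by simp
qed

lemma card_window_types_ge:
  assumes "distinct xs" and "j \<le> length xs"
  shows "j \<le> card (window_types xs j)"
  using assms(2)
proof (induction j)
  case (Suc j)
  then have IH: "j \<le> card (window_types xs j)" by simp
  show ?case
  proof (cases "card (window_types xs j) \<le> j")
    case True
    with IH card_window_types_Suc_gt[OF assms(1) Suc.prems] show ?thesis by linarith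
  next
    case False
    with card_window_types_mono[of xs j] show ?thesis by linarith
  qed
qed simp

lemma order_type_take_rotate:
  assumes "k \<le> length xs"
  shows "order_type k ((!) (take k (rotate r xs))) = window_type xs k r"
  using assms by (auto simp: order_type_def window_type_def cyc_nth_def nth_rotate fun_eq_iff)

lemma card_contained_patterns_ge:
  assumes \<sigma>: "\<sigma> \<in> perms n" and "k \<le> n"
  shows "k \<le> card {\<pi> \<in> perms k. cyc_contains \<sigma> \<pi>}"
proof -
  let ?C = "{\<pi> \<in> perms k. cyc_contains \<sigma> \<pi>}"
  have len: "length \<sigma> = n" and dist: "distinct \<sigma>" using \<sigma> by (simp_all add: perms_iff)
  have "window_types \<sigma> k \<subseteq> (\<lambda>\<pi>. order_type k ((!) \<pi>)) ` ?C"
  proof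
    fix R assume "R \<in> window_types \<sigma> k"
    then obtain r where r: "r < n" and R: "R = window_type \<sigma> k r"
      by (auto simp: window_types_def len)
    let ?w = "take k (rotate r \<sigma>)"
    have "length ?w = k" and "distinct ?w" using \<open>k \<le> n\<close> len dist by simp_all
    then obtain \<pi> where \<pi>: "\<pi> \<in> perms k" and iso: "order_iso ?w \<pi>"
      using ex_perms_order_iso by metis
    have "R = order_type k ((!) ?w)"
      using R order_type_take_rotate[of k \<sigma> r] \<open>k \<le> n\<close> len by simp
    also have "\<dots> = order_type k ((!) \<pi>)"
      using iso \<open>length ?w = k\<close> order_iso_iff_order_type by metis
    finally have "R = order_type k ((!) \<pi>)" .
    moreover have "cyc_contains \<sigma> \<pi>"
      unfolding cyc_contains_def using iso r \<open>k \<le> n\<close> len length_perms[OF \<pi>] by auto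
    ultimately show "R \<in> (\<lambda>\<pi>. order_type k ((!) \<pi>)) ` ?C" using \<pi> by blast
  qed
  moreover have "finite ?C" by (simp add: finite_perms)
  ultimately have "card (window_types \<sigma> k) \<le> card ?C"
    by (meson card_image_le card_mono finite_imageI le_trans)
  moreover have "k \<le> card (window_types \<sigma> k)"
    using card_window_types_ge[OF dist] \<open>k \<le> n\<close> len by simp
  ultimately show ?thesis by simp
qed

lemma card_avoidable_le:
  assumes "\<Pi> \<subseteq> perms k" and "avoidable \<Pi>"
  shows "card \<Pi> \<le> fact k - k"
proof -
  obtain n where "k \<le> n" and "Av n \<Pi> \<noteq> {}"
    using \<open>avoidable \<Pi>\<close> unfolding avoidable_def by (metis card.empty less_irrefl)
  then obtain \<sigma> where "\<sigma> \<in> perms n" and avoids: "\<forall>\<pi>\<in>\<Pi>. \<not> cyc_contains \<sigma> \<pi>"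
    unfolding Av_def by blast
  have "k \<le> card {\<pi> \<in> perms k. cyc_contains \<sigma> \<pi>}"
    using \<open>\<sigma> \<in> perms n\<close> \<open>k \<le> n\<close> by (rule card_contained_patterns_ge)
  also have "\<dots> \<le> card (perms k - \<Pi>)"
    using avoids by (intro card_mono) (auto simp: finite_perms)
  also have "\<dots> = fact k - card \<Pi>"
    using assms(1) finite_perms by (simp add: card_Diff_subset card_perms finite_subset)
  finally have "k \<le> fact k - card \<Pi>" .
  moreover have "card \<Pi> \<le> fact k"
    using card_mono[OF finite_perms assms(1)] by (simp add: card_perms)
  ultimately show ?thesis by linarith
qed

(* The window of length k starting at r wraps around after n - r entries; truncated subtraction
   makes the rotation r + k - n vanish when it does not wrap. *)
lemma mod_less_mod_rotation_iff:
  fixes r n k a b :: nat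
  assumes "r < n" "k \<le> n" "a < k" "b < k"
  shows "(r + a) mod n < (r + b) mod n \<longleftrightarrow> (r + k - n + a) mod k < (r + k - n + b) mod k"
proof -
  have mod_eq: "x mod m = (if x < m then x else x - m)" if "x < 2 * m" for x m :: nat
    using that by (cases "x < m") (simp_all add: le_mod_geq)
  show ?thesis
    using assms by (auto simp: mod_eq)
qed

lemma order_iso_take_rotate_upt:
  assumes "r < n" "k \<le> n"
  shows "order_iso (take k (rotate r [0..<n])) (rotate (r + k - n) [0..<k])"
  using assms by (auto simp: order_iso_def nth_rotate mod_less_mod_rotation_iff)

lemma cyc_eq_image: "cyc xs = (\<lambda>r. rotate r xs) ` {..<length xs}"
  by (auto simp: cyc_def)

lemma card_cyc_le: "card (cyc xs) \<le> length xs"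
  unfolding cyc_eq_image by (metis card_image_le card_lessThan finite_lessThan)

lemma cyc_contains_upt_imp_in_cyc:
  assumes "0 < k" and \<pi>: "\<pi> \<in> perms k" and "cyc_contains [0..<n] \<pi>"
  shows "\<pi> \<in> cyc [0..<k]"
proof -
  from assms obtain r where "k \<le> n" "r < n" and iso: "order_iso (take k (rotate r [0..<n])) \<pi>"
    unfolding cyc_contains_def by (auto simp: length_perms)
  let ?\<rho> = "rotate (r + k - n) [0..<k]"
  have "order_iso \<pi> ?\<rho>"
    using order_iso_trans[OF order_iso_sym[OF iso] order_iso_take_rotate_upt] \<open>r < n\<close> \<open>k \<le> n\<close>
    by blast
  moreover have "?\<rho> \<in> perms k" by (simp add: perms_def)
  ultimately have "\<pi> = ?\<rho>" using order_iso_perms_eq[OF \<pi>] by blast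
  moreover have "r + k - n < k" using \<open>0 < k\<close> \<open>r < n\<close> by linarith
  ultimately show ?thesis unfolding cyc_def by auto
qed

lemma finite_Av: "finite (Av n \<Pi>)"
proof (rule finite_subset)
  show "Av n \<Pi> \<subseteq> cyc ` perms n" unfolding Av_def by auto
qed (simp add: finite_perms)

lemma avoidable_perms_Diff_cyc_upt:
  assumes "0 < k"
  shows "avoidable (perms k - cyc [0..<k])"
  unfolding avoidable_def
proof
  fix N
  let ?n = "max N k"
  have "[0..<?n] \<in> perms ?n" by (simp add: perms_def)
  with cyc_contains_upt_imp_in_cyc[OF assms]
  have "cyc [0..<?n] \<in> Av ?n (perms k - cyc [0..<k])" unfolding Av_def by blast
  then have "card (Av ?n (perms k - cyc [0..<k])) > 0"
    using finite_Av card_gt_0_iff by blast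
  then show "\<exists>n\<ge>N. card (Av n (perms k - cyc [0..<k])) > 0" by (metis max.cobounded1)
qed

theorem theorem7p1:
  fixes k :: nat
  assumes "k \<ge> 1"
  shows "(\<exists>\<Pi>. \<Pi> \<subseteq> perms k \<and> avoidable \<Pi> \<and> card \<Pi> = fact k - k) \<and>
         (\<forall>\<Pi>. \<Pi> \<subseteq> perms k \<and> avoidable \<Pi> \<longrightarrow> card \<Pi> \<le> fact k - k)"
proof -
  let ?\<Pi> = "perms k - cyc [0..<k]"
  have "fact k - k \<le> card (perms k) - card (cyc [0..<k])"
    using card_cyc_le[of "[0..<k]"] by (simp add: card_perms)
  also have "\<dots> \<le> card ?\<Pi>"
    by (rule diff_card_le_card_Diff) (simp add: cyc_eq_image)
  finally have "fact k - k \<le> card ?\<Pi>" .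
  moreover have "avoidable ?\<Pi>" using assms by (simp add: avoidable_perms_Diff_cyc_upt)
  ultimately have "card ?\<Pi> = fact k - k" by (simp add: card_avoidable_le le_antisym)
  with \<open>avoidable ?\<Pi>\<close> show ?thesis using card_avoidable_le by blast
qed

end
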